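(* Let $k\ge1$ and let $S_1,\dots,S_k\in\mathcal{B}_A(\mathcal{H})$. Then for every positive integer $n$, $$\omega_A^{2n}\Big(\sum_{i=1}^kS_i\Big)\le\frac{k^{2n-1}}{\sqrt2}\sum_{i=1}^k\omega_A\Big(\big(S_i^{\sharp_A}S_i\big)^n+i\,\big(S_iS_i^{\sharp_A}\big)^n\Big),$$ where the $i$ multiplying $\big(S_iS_i^{\sharp_A}\big)^n$ is the imaginary unit.
   Context: $\mathcal{H}$ is a complex Hilbert space with inner product $\langle\cdot,\cdot\rangle$, and $A$ is a fixed nonzero positive bounded operator on $\mathcal{H}$. Set $\langle x,y\rangle_A=\langle Ax,y\rangle$ and $\|x\|_A=\|A^{1/2}x\|$. $\mathcal{B}_A(\mathcal{H})$ is the set of bounded operators $T$ for which there exists a bounded $S$ with $\langle Tx,y\rangle_A=\langle x,Sy\rangle_A$ for all $x,y$ (equivalently $\mathcal{R}(T^*A)\subseteq\mathcal{R}(A)$). For $T\in\mathcal{B}_A(\mathcal{H})$, $T^{\sharp_A}=A^\dagger T^*A$ ($A^\dagger$ the Moore–Penrose inverse) is the reduced solution of $AX=T^*A$. $\omega_A(T)=\sup\{|\langle Tx,x\rangle_A|:\|x\|_A=1\}$. *)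

theory Defs
  imports "HOL-Analysis.Analysis"
begin

class complex_vector = real_vector +
  fixes scaleC :: "complex \<Rightarrow> 'a \<Rightarrow> 'a" (infixr "*\<^sub>C" 75)
  assumes scaleC_add_right: "scaleC a (x + y) = scaleC a x + scaleC a y"
    and scaleC_add_left: "scaleC (a + b) x = scaleC a x + scaleC b x"
    and scaleC_scaleC: "scaleC a (scaleC b x) = scaleC (a * b) x"
    and scaleC_one: "scaleC 1 x = x"
    and scaleR_scaleC: "scaleR r x = scaleC (complex_of_real r) x"

text \<open>Inner product linear in the first argument, conjugate-linear in the second.\<close>
class complex_inner = complex_vector + real_normed_vector +
  fixes cinner :: "'a \<Rightarrow> 'a \<Rightarrow> complex"
  assumes cinner_commute: "cinner x y = cnj (cinner y x)"
    and cinner_add_left: "cinner (x + y) z = cinner x z + cinner y z"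
    and cinner_scaleC_left: "cinner (scaleC r x) y = r * cinner x y"
    and cinner_self_real: "Im (cinner x x) = 0"
    and cinner_self_nonneg: "0 \<le> Re (cinner x x)"
    and cinner_self_eq_zero: "cinner x x = 0 \<longleftrightarrow> x = 0"
    and norm_eq_sqrt_cinner: "norm x = sqrt (Re (cinner x x))"

class chilbert_space = complex_inner + complete_space

definition cblinear :: "('a::complex_inner \<Rightarrow> 'a) \<Rightarrow> bool" where
  "cblinear T \<longleftrightarrow> bounded_linear T \<and> (\<forall>c x. T (c *\<^sub>C x) = c *\<^sub>C T x)"

definition adj :: "('a::complex_inner \<Rightarrow> 'a) \<Rightarrow> ('a \<Rightarrow> 'a)" where
  "adj T = (THE S. \<forall>x y. cinner (T x) y = cinner x (S y))"

definition positive_op :: "('a::complex_inner \<Rightarrow> 'a) \<Rightarrow> bool" where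
  "positive_op A \<longleftrightarrow> cblinear A \<and> (\<forall>x. Im (cinner (A x) x) = 0 \<and> 0 \<le> Re (cinner (A x) x))"

definition inner_A :: "('a::complex_inner \<Rightarrow> 'a) \<Rightarrow> 'a \<Rightarrow> 'a \<Rightarrow> complex" where
  "inner_A A x y = cinner (A x) y"

definition norm_A :: "('a::complex_inner \<Rightarrow> 'a) \<Rightarrow> 'a \<Rightarrow> real" where
  "norm_A A x = sqrt (Re (inner_A A x x))"

definition B_A :: "('a::complex_inner \<Rightarrow> 'a) \<Rightarrow> ('a \<Rightarrow> 'a) set" where
  "B_A A = {T. cblinear T \<and> (\<exists>S. cblinear S \<and> (\<forall>x y. inner_A A (T x) y = inner_A A x (S y)))}"

text \<open>T^{sharp_A} = A^dagger T^* A, i.e. the reduced solution (Douglas) of A X = T^* A: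
  the unique bounded solution whose range lies in the closure of the range of A.\<close>
definition sharp_A :: "('a::complex_inner \<Rightarrow> 'a) \<Rightarrow> ('a \<Rightarrow> 'a) \<Rightarrow> ('a \<Rightarrow> 'a)" where
  "sharp_A A T = (THE X. cblinear X \<and> (\<forall>x. A (X x) = adj T (A x)) \<and> range X \<subseteq> closure (range A))"

definition omega_A :: "('a::complex_inner \<Rightarrow> 'a) \<Rightarrow> ('a \<Rightarrow> 'a) \<Rightarrow> real" where
  "omega_A A T = Sup {cmod (inner_A A (T x) x) | x. norm_A A x = 1}"

end

(*
  Fix one operator S with A-adjoint X = S^{#A} and put P = X S, Q = S X. Both are A-selfadjoint
  and A-positive, with <P x, x>_A = ||S x||_A^2 and <Q x, x>_A = ||X x||_A^2, so for an A-unit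
  vector x two applications of Cauchy-Schwarz give |<S x, x>_A|^4 <= <P x, x>_A <Q x, x>_A.
  McCarthy's inequality <M x, x>_A^n <= <M^n x, x>_A for A-positive M, a consequence of the
  log-convexity of j |-> <M^j x, x>_A, raises this to |<S x, x>_A|^(4n) <= <P^n x, x>_A <Q^n x, x>_A,
  and since both factors are real the right-hand side is at most |<(P^n + i Q^n) x, x>_A|^2 / 2.
  For S_1 + ... + S_k the triangle inequality and the power-mean inequality
  (a_1 + ... + a_k)^(2n) <= k^(2n-1) (a_1^(2n) + ... + a_k^(2n)) conclude.

  That S^{#A} = A^dagger S^* A is well defined rests on the projection theorem and the Riesz
  representation. The numerical radii involved are finite because McCarthy's inequality, played
  against the crude bound <M^n x, x>_A <= ||A|| ||M||^n ||x||^2, yields <M x, x>_A <= ||M|| <x, x>_A.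
*)

theory Submission
  imports Defs
begin

section \<open>Real inequalities\<close>

lemma quadratic_nonneg_imp_le:
  fixes a b c :: real
  assumes "0 \<le> b" "0 \<le> c" and nonneg: "\<And>s. 0 \<le> a - 2 * s * c + s\<^sup>2 * c * b"
  shows "c \<le> a * b"
proof (cases "b = 0")
  case True
  have "0 \<le> a - 2 * ((a + 1) / (2 * c)) * c" if "c > 0"
    using nonneg[of "(a + 1) / (2 * c)"] True by simp
  then show ?thesis using True \<open>0 \<le> c\<close> by (cases "c = 0") auto
next
  case False
  then have "0 \<le> a - c / b"
    using nonneg[of "1 / b"] by (simp add: power2_eq_square field_simps)
  then show ?thesis using False \<open>0 \<le> b\<close> by (simp add: field_simps)
qed

lemma log_convex_power_le:
  fixes f :: "nat \<Rightarrow> real"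
  assumes nonneg: "\<And>m. 0 \<le> f m"
    and log_convex: "\<And>m. (f (Suc m))\<^sup>2 \<le> f m * f (Suc (Suc m))"
  shows "f 1 ^ n * f 0 \<le> f 0 ^ n * f n"
proof -
  have step: "f 1 * f m \<le> f 0 * f (Suc m)" for m
  proof (induction m)
    case (Suc m)
    show ?case
    proof (cases "f (Suc m) = 0")
      case False
      have "f (Suc m) * (f 1 * f (Suc m)) \<le> f 1 * (f m * f (Suc (Suc m)))"
        using mult_left_mono[OF log_convex[of m] nonneg[of 1]] by (simp add: power2_eq_square ac_simps)
      also have "\<dots> \<le> f (Suc m) * (f 0 * f (Suc (Suc m)))"
        using mult_right_mono[OF Suc.IH nonneg[of "Suc (Suc m)"]] by (simp add: ac_simps)
      finally show ?thesis using False nonneg[of "Suc m"] by simp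
    qed (use nonneg in simp)
  qed simp
  show ?thesis
  proof (induction n)
    case (Suc n)
    have "f 1 ^ Suc n * f 0 \<le> f 1 * (f 0 ^ n * f n)"
      using mult_left_mono[OF Suc.IH nonneg[of 1]] by simp
    also have "\<dots> \<le> f 0 ^ n * (f 0 * f (Suc n))"
      using mult_left_mono[OF step[of n] zero_le_power[OF nonneg[of 0]]] by (simp add: ac_simps)
    finally show ?case by (simp add: ac_simps)
  qed simp
qed

lemma le_of_power_le_const_mult_power:
  fixes q K C :: real
  assumes "0 < K" and bound: "\<And>n. q ^ n \<le> C * K ^ n"
  shows "q \<le> K"
proof (rule ccontr)
  assume "\<not> q \<le> K"
  then have "1 < q / K" using \<open>0 < K\<close> by simp
  then obtain n where "C < (q / K) ^ n" using real_arch_pow by blast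
  then show False using bound[of n] \<open>0 < K\<close> by (simp add: field_simps)
qed

lemma power_sum_le_card_power_sum:
  fixes a :: "'i \<Rightarrow> real"
  assumes "finite I" "I \<noteq> {}" "even m" "0 < m"
  shows "(\<Sum>i\<in>I. a i) ^ m \<le> real (card I) ^ (m - 1) * (\<Sum>i\<in>I. a i ^ m)"
proof -
  let ?k = "real (card I)"
  have k: "0 < ?k" using assms(1,2) by (simp add: card_gt_0_iff)
  have "((\<Sum>i\<in>I. a i) / ?k) ^ m \<le> (\<Sum>i\<in>I. a i ^ m) / ?k"
    using convex_on_sum[OF assms(1,2) convex_power_even[OF assms(3)], of "\<lambda>_. 1 / ?k" a] k
    by (simp add: sum_divide_distrib)
  moreover have "?k ^ m = ?k * ?k ^ (m - 1)" using \<open>0 < m\<close> by (simp add: power_eq_if)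
  ultimately show ?thesis using k by (simp add: field_simps)
qed

lemma Sup_power_le:
  fixes E :: "real set"
  assumes "E \<noteq> {}" "0 < m" and nonneg: "\<And>e. e \<in> E \<Longrightarrow> 0 \<le> e"
    and bound: "\<And>e. e \<in> E \<Longrightarrow> e ^ m \<le> R"
  shows "Sup E ^ m \<le> R"
proof -
  obtain e0 where "e0 \<in> E" using assms(1) by blast
  then have "0 \<le> R"
    using bound[OF \<open>e0 \<in> E\<close>] zero_le_power[OF nonneg[OF \<open>e0 \<in> E\<close>], of m] by linarith
  have le_root: "e \<le> root m R" if "e \<in> E" for e
    using real_root_le_mono[OF \<open>0 < m\<close> bound[OF that]] real_root_power_cancel[OF \<open>0 < m\<close> nonneg[OF that]]
    by simp
  have "Sup E \<le> root m R"
    using assms(1) le_root by (rule cSup_least)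
  moreover have "0 \<le> Sup E"
    using nonneg[OF \<open>e0 \<in> E\<close>] cSup_upper[OF \<open>e0 \<in> E\<close> bdd_aboveI[OF le_root]] by linarith
  ultimately have "Sup E ^ m \<le> root m R ^ m"
    by (rule power_mono)
  then show ?thesis
    using \<open>0 < m\<close> \<open>0 \<le> R\<close> by simp
qed

section \<open>Hermitian positive semidefinite forms\<close>

locale psd_form =
  fixes B :: "'a::complex_vector \<Rightarrow> 'a \<Rightarrow> complex"
  assumes add_left: "B (x + y) z = B x z + B y z"
    and scale_left: "B (c *\<^sub>C x) y = c * B x y"
    and herm: "B x y = cnj (B y x)"
    and nonneg: "0 \<le> Re (B x x)"
begin

lemma add_right: "B x (y + z) = B x y + B x z"
  by (metis add_left complex_cnj_add herm)

lemma scale_right: "B x (c *\<^sub>C y) = cnj c * B x y"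
  by (metis complex_cnj_mult herm scale_left)

lemma diff_left: "B (x - y) z = B x z - B y z"
  using add_left[of "x - y" y z] by simp

lemma diff_right: "B x (y - z) = B x y - B x z"
  using add_right[of x "y - z" z] by simp

lemma zero_left [simp]: "B 0 y = 0"
  using add_left[of 0 0 y] by simp

lemma zero_right [simp]: "B x 0 = 0"
  using add_right[of x 0 0] by simp

lemma sum_left: "B (\<Sum>i\<in>I. f i) y = (\<Sum>i\<in>I. B (f i) y)"
  by (induction I rule: infinite_finite_induct) (auto simp: add_left)

lemma self_of_real: "B x x = of_real (Re (B x x))"
  using herm[of x x] by (simp add: complex_eq_iff)

lemma Re_commute: "Re (B y x) = Re (B x y)"
  by (subst herm) simp

lemma Re_along_real_multiple:
  fixes x y :: 'a and s :: real
  defines "c \<equiv> (cmod (B x y))\<^sup>2"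
  shows "Re (B (x - (of_real s * B x y) *\<^sub>C y) (x - (of_real s * B x y) *\<^sub>C y))
    = Re (B x x) - 2 * s * c + s\<^sup>2 * c * Re (B y y)"
proof -
  have "cmod (B x y) * cmod (B x y) = Re (B x y) * Re (B x y) + Im (B x y) * Im (B x y)"
    using cmod_power2[of "B x y"] by (simp add: power2_eq_square)
  moreover have "B y x = cnj (B x y)" by (rule herm)
  ultimately show ?thesis
    by (subst (3) self_of_real)
      (simp add: c_def diff_left diff_right scale_left scale_right algebra_simps
        power2_eq_square)
qed

theorem Cauchy_Schwarz: "(cmod (B x y))\<^sup>2 \<le> Re (B x x) * Re (B y y)"
  by (rule quadratic_nonneg_imp_le[OF nonneg zero_le_power2])
    (metis Re_along_real_multiple nonneg)

lemma Cauchy_Schwarz_sqrt: "cmod (B x y) \<le> sqrt (Re (B x x)) * sqrt (Re (B y y))"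
  using real_sqrt_le_mono[OF Cauchy_Schwarz[of x y]] by (simp add: real_sqrt_mult)

lemma orthogonal_if_minimal:
  assumes "\<And>t. Re (B u u) \<le> Re (B (u - t *\<^sub>C y) (u - t *\<^sub>C y))"
  shows "B u y = 0"
proof -
  have "(cmod (B u y))\<^sup>2 \<le> 0 * Re (B y y)"
  proof (rule quadratic_nonneg_imp_le[OF nonneg zero_le_power2])
    show "0 \<le> 0 - 2 * s * (cmod (B u y))\<^sup>2 + s\<^sup>2 * (cmod (B u y))\<^sup>2 * Re (B y y)" for s
      using assms[of "of_real s * B u y"] by (simp add: Re_along_real_multiple)
  qed
  then show ?thesis by simp
qed

definition selfadjoint :: "('a \<Rightarrow> 'a) \<Rightarrow> bool" where
  "selfadjoint M \<longleftrightarrow> (\<forall>u v. B (M u) v = B u (M v))"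

definition positive :: "('a \<Rightarrow> 'a) \<Rightarrow> bool" where
  "positive M \<longleftrightarrow> (\<forall>u. 0 \<le> Re (B (M u) u))"

lemma selfadjoint_of_real:
  assumes "selfadjoint M"
  shows "B (M x) x = of_real (Re (B (M x) x))"
proof -
  have "B (M x) x = cnj (B (M x) x)"
    using assms herm[of x "M x"] unfolding selfadjoint_def by simp
  then show ?thesis by (simp add: complex_eq_iff)
qed

lemma selfadjoint_funpow:
  assumes "selfadjoint M"
  shows "selfadjoint (M ^^ j)"
  unfolding selfadjoint_def
proof (induction j)
  case (Suc j)
  have "B ((M ^^ Suc j) u) v = B u ((M ^^ Suc j) v)" for u v
  proof -
    have "B ((M ^^ Suc j) u) v = B ((M ^^ j) u) (M v)"
      using assms unfolding selfadjoint_def by simp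
    also have "\<dots> = B u ((M ^^ Suc j) v)"
      using Suc.IH by (simp add: funpow_swap1)
    finally show ?thesis .
  qed
  then show ?case by blast
qed simp

lemma positive_funpow:
  assumes sa: "selfadjoint M" and pos: "positive M"
  shows "positive (M ^^ j)"
  unfolding positive_def
proof
  fix u
  have sa_pow: "B ((M ^^ c) w) v = B w ((M ^^ c) v)" for c w v
    using selfadjoint_funpow[OF sa] unfolding selfadjoint_def by blast
  obtain c where "j = c + c \<or> j = Suc (c + c)"
    by (metis oddE evenE mult_2 Suc_eq_plus1)
  then show "0 \<le> Re (B ((M ^^ j) u) u)"
  proof
    assume "j = c + c"
    then have "B ((M ^^ j) u) u = B ((M ^^ c) u) ((M ^^ c) u)"
      by (simp add: funpow_add sa_pow)
    then show ?thesis by (simp add: nonneg)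
  next
    assume "j = Suc (c + c)"
    then have "B ((M ^^ j) u) u = B (M ((M ^^ c) u)) ((M ^^ c) u)"
      by (simp add: funpow_add funpow_swap1 sa_pow)
    then show ?thesis using pos unfolding positive_def by simp
  qed
qed

lemma psd_form_selfadjoint:
  assumes sa: "selfadjoint M" and pos: "positive M"
  shows "psd_form (\<lambda>u v. B (M u) v)"
proof
  have sa': "B (M u) v = B u (M v)" for u v using sa unfolding selfadjoint_def by blast
  show "B (M (x + y)) z = B (M x) z + B (M y) z" for x y z
    by (simp add: sa' add_left)
  show "B (M (c *\<^sub>C x)) y = c * B (M x) y" for c x y
    by (simp add: sa' scale_left)
  show "B (M x) y = cnj (B (M y) x)" for x y
    by (simp add: sa' herm[of x])
  show "0 \<le> Re (B (M x) x)" for x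
    using pos unfolding positive_def by blast
qed

theorem McCarthy_inequality:
  assumes sa: "selfadjoint M" and pos: "positive M"
  shows "Re (B (M x) x) ^ n * Re (B x x) \<le> Re (B x x) ^ n * Re (B ((M ^^ n) x) x)"
proof -
  define f where "f j = Re (B ((M ^^ j) x) x)" for j
  have "f 1 ^ n * f 0 \<le> f 0 ^ n * f n"
  proof (rule log_convex_power_le)
    show "0 \<le> f m" for m
      using positive_funpow[OF sa pos] unfolding f_def positive_def by blast
    show "(f (Suc m))\<^sup>2 \<le> f m * f (Suc (Suc m))" for m
    proof -
      interpret M_m: psd_form "\<lambda>u v. B ((M ^^ m) u) v"
        by (rule psd_form_selfadjoint[OF selfadjoint_funpow positive_funpow]) (use sa pos in auto)
      \<comment> \<open>Cauchy--Schwarz for the form of \<open>M ^^ m\<close>, applied to \<open>x\<close> and \<open>M x\<close>\<close>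
      have sa': "B (M u) v = B u (M v)" for u v using sa unfolding selfadjoint_def by blast
      have "B ((M ^^ m) x) (M x) = B ((M ^^ Suc m) x) x"
        by (simp add: sa')
      moreover have "B ((M ^^ m) (M x)) (M x) = B ((M ^^ Suc (Suc m)) x) x"
        by (simp add: sa'[symmetric] funpow_swap1)
      ultimately have "(cmod (B ((M ^^ Suc m) x) x))\<^sup>2 \<le> f m * f (Suc (Suc m))"
        using M_m.Cauchy_Schwarz[of x "M x"] unfolding f_def by simp
      then show ?thesis
        unfolding f_def using cmod_power2[of "B ((M ^^ Suc m) x) x"]
        by (smt (verit) zero_le_power2)
    qed
  qed
  then show ?thesis unfolding f_def by simp
qed

lemma adjoint_pair_products:
  assumes adj: "\<And>a b. B (S a) b = B a (X b)"
  shows "B ((X \<circ> S) u) v = B (S u) (S v)" and "B ((S \<circ> X) u) v = B (X u) (X v)"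
proof -
  show "B ((X \<circ> S) u) v = B (S u) (S v)"
    by (simp add: herm[of "X (S u)"] adj[symmetric] herm[of "S v"])
  show "B ((S \<circ> X) u) v = B (X u) (X v)"
    by (simp add: adj)
qed

lemma adjoint_pair_selfadjoint_positive:
  assumes adj: "\<And>a b. B (S a) b = B a (X b)"
  shows "selfadjoint (X \<circ> S)" "positive (X \<circ> S)" "selfadjoint (S \<circ> X)" "positive (S \<circ> X)"
proof -
  note products = adjoint_pair_products[OF adj]
  show "selfadjoint (X \<circ> S)"
    unfolding selfadjoint_def products by (metis products(1) herm)
  show "selfadjoint (S \<circ> X)"
    unfolding selfadjoint_def products by (metis products(2) herm)
  show "positive (X \<circ> S)" "positive (S \<circ> X)"
    unfolding positive_def products by (simp_all add: nonneg)
qed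

lemma cmod_adjoint_pair_le:
  assumes adj: "\<And>a b. B (S a) b = B a (X b)"
  shows "(cmod (B (S x) x))\<^sup>2 \<le> Re (B ((X \<circ> S) x) x) * Re (B x x)"
    and "(cmod (B (S x) x))\<^sup>2 \<le> Re (B ((S \<circ> X) x) x) * Re (B x x)"
proof -
  show "(cmod (B (S x) x))\<^sup>2 \<le> Re (B ((X \<circ> S) x) x) * Re (B x x)"
    using Cauchy_Schwarz[of "S x" x] unfolding adjoint_pair_products[OF adj] by simp
  have "B (S x) x = cnj (B (X x) x)" by (simp add: adj herm[of x])
  then show "(cmod (B (S x) x))\<^sup>2 \<le> Re (B ((S \<circ> X) x) x) * Re (B x x)"
    using Cauchy_Schwarz[of "X x" x] unfolding adjoint_pair_products[OF adj] by simp
qed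

lemma cmod_selfadjoint_add_i:
  assumes "selfadjoint P" "selfadjoint Q"
  shows "(cmod (B (P x + \<i> *\<^sub>C Q x) x))\<^sup>2 = (Re (B (P x) x))\<^sup>2 + (Re (B (Q x) x))\<^sup>2"
proof -
  have "B (P x + \<i> *\<^sub>C Q x) x = Complex (Re (B (P x) x)) (Re (B (Q x) x))"
    using selfadjoint_of_real[OF assms(1), of x] selfadjoint_of_real[OF assms(2), of x]
    by (simp add: add_left scale_left complex_eq_iff)
  then show ?thesis by (simp add: cmod_power2)
qed

theorem adjoint_pair_power_bound:
  assumes adj: "\<And>a b. B (S a) b = B a (X b)" and unit: "Re (B x x) = 1"
  shows "cmod (B (S x) x) ^ (2 * n)
    \<le> cmod (B (((X \<circ> S) ^^ n) x + \<i> *\<^sub>C ((S \<circ> X) ^^ n) x) x) / sqrt 2"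
proof -
  note XS = adjoint_pair_selfadjoint_positive(1,2)[OF adj]
  note SX = adjoint_pair_selfadjoint_positive(3,4)[OF adj]
  define a where "a = cmod (B (S x) x)"
  define p where "p = Re (B ((X \<circ> S) x) x)"
  define q where "q = Re (B ((S \<circ> X) x) x)"
  define pn where "pn = Re (B (((X \<circ> S) ^^ n) x) x)"
  define qn where "qn = Re (B (((S \<circ> X) ^^ n) x) x)"
  define c where "c = cmod (B (((X \<circ> S) ^^ n) x + \<i> *\<^sub>C ((S \<circ> X) ^^ n) x) x)"
  have "(a\<^sup>2)\<^sup>2 \<le> p * q"
    using cmod_adjoint_pair_le[OF adj, of x] unit unfolding a_def p_def q_def
    by (simp add: power2_eq_square mult_mono')
  then have "a ^ (4 * n) \<le> p ^ n * q ^ n"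
    using power_mono[of "(a\<^sup>2)\<^sup>2" "p * q" n]
    by (simp add: power_mult_distrib flip: power_mult)
  also have "\<dots> \<le> pn * qn"
  proof (rule mult_mono)
    show "p ^ n \<le> pn" "q ^ n \<le> qn"
      using McCarthy_inequality[OF XS, of x n] McCarthy_inequality[OF SX, of x n] unit
      unfolding p_def q_def pn_def qn_def by simp_all
    show "0 \<le> pn" "0 \<le> q ^ n"
      using positive_funpow[OF XS, of n] SX(2)
      unfolding pn_def q_def positive_def by simp_all
  qed
  also have "\<dots> \<le> (pn\<^sup>2 + qn\<^sup>2) / 2"
    using sum_squares_bound[of pn qn] by (simp add: power2_eq_square)
  also have "pn\<^sup>2 + qn\<^sup>2 = c\<^sup>2"
    unfolding pn_def qn_def c_def
    by (rule cmod_selfadjoint_add_i[OF selfadjoint_funpow[OF XS(1)] selfadjoint_funpow[OF SX(1)], symmetric])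
  finally have "(a ^ (2 * n))\<^sup>2 \<le> c\<^sup>2 / 2"
    by (simp flip: power_mult)
  then have "a ^ (2 * n) \<le> sqrt (c\<^sup>2 / 2)"
    by (rule real_le_rsqrt)
  then show ?thesis
    unfolding a_def c_def by (simp add: real_sqrt_divide)
qed

end

section \<open>Complex inner product and Hilbert spaces\<close>

interpretation cinner: psd_form "cinner :: 'a::complex_inner \<Rightarrow> 'a \<Rightarrow> complex"
  by unfold_locales (fact cinner_add_left cinner_scaleC_left cinner_commute cinner_self_nonneg)+

lemma power2_norm_eq_cinner: "(norm x)\<^sup>2 = Re (cinner x x)"
  by (simp add: norm_eq_sqrt_cinner cinner_self_nonneg)

lemma cinner_Cauchy_Schwarz: "cmod (cinner x y) \<le> norm x * norm y"
  using cinner.Cauchy_Schwarz_sqrt[of x y] by (simp add: norm_eq_sqrt_cinner)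

lemma cinner_eqI:
  assumes "\<And>z. cinner z x = cinner z y"
  shows "x = y"
proof -
  have "cinner (x - y) (x - y) = 0"
    using assms[of "x - y"] by (simp add: cinner.diff_right)
  then show ?thesis by (simp add: cinner_self_eq_zero)
qed

lemma norm_add_power2: "(norm (x + y))\<^sup>2 = (norm x)\<^sup>2 + (norm y)\<^sup>2 + 2 * Re (cinner x y)"
  using cinner.Re_commute[of y x]
  by (simp add: power2_norm_eq_cinner cinner.add_left cinner.add_right)

lemma parallelogram_law:
  "(norm (x + y))\<^sup>2 + (norm (x - y))\<^sup>2 = 2 * (norm x)\<^sup>2 + 2 * (norm (y::'a::complex_inner))\<^sup>2"
  using norm_add_power2[of x y] norm_add_power2[of x "- y"] cinner.diff_right[of x 0 y]
  by simp

lemma Apollonius_identity: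
  "(norm (a - b))\<^sup>2
    = 2 * (norm (x - a))\<^sup>2 + 2 * (norm (x - b))\<^sup>2 - 4 * (norm (x - (1/2) *\<^sub>R (a + b)))\<^sup>2"
  for a b x :: "'a::complex_inner"
proof -
  have "(x - a) + (x - b) = 2 *\<^sub>R (x - (1/2) *\<^sub>R (a + b))"
    by (simp add: algebra_simps scaleR_2)
  then have "(norm ((x - a) + (x - b)))\<^sup>2 = 4 * (norm (x - (1/2) *\<^sub>R (a + b)))\<^sup>2"
    by (simp add: power_mult_distrib)
  then show ?thesis
    using parallelogram_law[of "x - a" "x - b"] by (simp add: norm_minus_commute)
qed

lemma norm_scaleC: "norm (c *\<^sub>C x) = cmod c * norm (x::'a::complex_inner)"
proof -
  have "cinner (c *\<^sub>C x) (c *\<^sub>C x) = (c * cnj c) * cinner x x"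
    by (simp add: cinner_scaleC_left cinner.scale_right)
  also have "\<dots> = of_real ((cmod c)\<^sup>2 * Re (cinner x x))"
    by (subst cinner.self_of_real) (simp only: complex_norm_square of_real_mult)
  finally show ?thesis
    by (simp add: norm_eq_sqrt_cinner real_sqrt_mult)
qed

lemma bounded_linear_scaleC: "bounded_linear (\<lambda>x::'a::complex_inner. c *\<^sub>C x)"
proof (rule bounded_linear_intro[where K = "cmod c"])
  show "c *\<^sub>C (r *\<^sub>R x) = r *\<^sub>R (c *\<^sub>C x)" for r and x :: 'a
    by (simp add: scaleR_scaleC scaleC_scaleC mult.commute)
qed (simp_all add: scaleC_add_right norm_scaleC mult.commute)

lemma bounded_linear_cinner_left: "bounded_linear (\<lambda>x. cinner x y)"
proof (rule bounded_linear_intro[where K = "norm y"])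
  show "cinner (r *\<^sub>R x) y = r *\<^sub>R cinner x y" for r x
    by (simp add: scaleR_scaleC cinner_scaleC_left scaleR_conv_of_real)
qed (simp_all add: cinner_add_left cinner_Cauchy_Schwarz)

definition csubspace :: "'a::complex_vector set \<Rightarrow> bool" where
  "csubspace M \<longleftrightarrow> 0 \<in> M \<and> (\<forall>x\<in>M. \<forall>y\<in>M. x + y \<in> M) \<and> (\<forall>c. \<forall>x\<in>M. c *\<^sub>C x \<in> M)"

lemma csubspace_convex: "csubspace M \<Longrightarrow> convex M"
  unfolding csubspace_def convex_def by (simp add: scaleR_scaleC)

lemma scaleC_diff_right: "c *\<^sub>C (x - y) = c *\<^sub>C x - c *\<^sub>C (y::'a::complex_vector)"
  by (metis scaleC_add_right eq_diff_eq)

lemma scaleC_minus_one: "(- 1) *\<^sub>C x = - (x::'a::complex_vector)"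
  using scaleR_scaleC[of "- 1" x] by simp

lemma csubspace_diff: "csubspace M \<Longrightarrow> x \<in> M \<Longrightarrow> y \<in> M \<Longrightarrow> x - y \<in> M"
  unfolding csubspace_def by (metis scaleC_minus_one diff_conv_add_uminus)

lemma csubspace_closure:
  fixes M :: "'a::complex_inner set"
  assumes "csubspace M"
  shows "csubspace (closure M)"
  unfolding csubspace_def
proof (intro conjI ballI allI)
  show "0 \<in> closure M"
    using assms closure_subset unfolding csubspace_def by blast
next
  fix x y assume "x \<in> closure M" "y \<in> closure M"
  then obtain f g where "\<forall>n. f n \<in> M" "f \<longlonglongrightarrow> x" "\<forall>n. g n \<in> M" "g \<longlonglongrightarrow> y"
    unfolding closure_sequential by blast
  then show "x + y \<in> closure M"
    using assms unfolding closure_sequential csubspace_def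
    by (intro exI[of _ "\<lambda>n. f n + g n"]) (auto intro: tendsto_add)
next
  fix c x assume "x \<in> closure M"
  then obtain f where "\<forall>n. f n \<in> M" "f \<longlonglongrightarrow> x"
    unfolding closure_sequential by blast
  then show "c *\<^sub>C x \<in> closure M"
    using assms bounded_linear.tendsto[OF bounded_linear_scaleC]
    unfolding closure_sequential csubspace_def
    by (intro exI[of _ "\<lambda>n. c *\<^sub>C f n"]) auto
qed

lemma Cauchy_if_dist_le_vanishing:
  fixes m :: "nat \<Rightarrow> 'a::metric_space" and e :: "nat \<Rightarrow> real"
  assumes dist: "\<And>i j. dist (m i) (m j) \<le> e i + e j" and "e \<longlonglongrightarrow> 0"
  shows "Cauchy m"
proof (rule metric_CauchyI)
  fix r :: real assume "0 < r"
  then obtain N where N: "\<And>n. N \<le> n \<Longrightarrow> \<bar>e n\<bar> < r / 2"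
    using LIMSEQ_D[OF \<open>e \<longlonglongrightarrow> 0\<close>, of "r / 2"] by auto
  have "dist (m i) (m j) < r" if "N \<le> i" "N \<le> j" for i j
    using dist[of i j] N[OF that(1)] N[OF that(2)] by linarith
  then show "\<exists>N. \<forall>i\<ge>N. \<forall>j\<ge>N. dist (m i) (m j) < r" by blast
qed

theorem nearest_point_exists:
  fixes M :: "'a::chilbert_space set"
  assumes "closed M" "convex M" "M \<noteq> {}"
  shows "\<exists>p\<in>M. \<forall>a\<in>M. norm (x - p) \<le> norm (x - a)"
proof -
  define d where "d = (INF a\<in>M. (norm (x - a))\<^sup>2)"
  have d_le: "d \<le> (norm (x - a))\<^sup>2" if "a \<in> M" for a
    unfolding d_def by (rule cINF_lower[OF bdd_belowI[of _ 0] that]) auto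
  have "\<exists>a\<in>M. (norm (x - a))\<^sup>2 < d + inverse (Suc j)" for j
    using cInf_lessD[of "(\<lambda>a. (norm (x - a))\<^sup>2) ` M" "d + inverse (Suc j)"] assms(3)
    unfolding d_def by auto
  then obtain m where m: "\<And>j. m j \<in> M" "\<And>j. (norm (x - m j))\<^sup>2 < d + inverse (Suc j)"
    by metis
  have close: "(norm (m i - m j))\<^sup>2 \<le> 2 * inverse (Suc i) + 2 * inverse (Suc j)" for i j
  proof -
    have "(1/2) *\<^sub>R m i + (1/2) *\<^sub>R m j \<in> M"
      by (rule convexD[OF assms(2) m(1) m(1)]) auto
    then have "d \<le> (norm (x - (1/2) *\<^sub>R (m i + m j)))\<^sup>2"
      using d_le by (simp add: scaleR_right_distrib)
    then show ?thesis
      using Apollonius_identity[of "m i" "m j" x] m(2)[of i] m(2)[of j] by simp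
  qed
  have "dist (m i) (m j) \<le> sqrt (2 * inverse (Suc i)) + sqrt (2 * inverse (Suc j))" for i j
    using real_sqrt_le_mono[OF close[of i j]] sqrt_add_le_add_sqrt[of "2 * inverse (Suc i)" "2 * inverse (Suc j)"]
    by (simp add: dist_norm)
  moreover have "(\<lambda>i. sqrt (2 * inverse (Suc i))) \<longlonglongrightarrow> 0"
    using tendsto_real_sqrt[OF tendsto_mult[OF tendsto_const LIMSEQ_inverse_real_of_nat], of 2]
    by simp
  ultimately have "Cauchy m"
    by (intro Cauchy_if_dist_le_vanishing)
  then obtain p where p: "m \<longlonglongrightarrow> p"
    using Cauchy_convergent_iff convergent_def by blast
  have "(norm (x - p))\<^sup>2 \<le> d + 0"
  proof (rule LIMSEQ_le)
    show "(\<lambda>j. (norm (x - m j))\<^sup>2) \<longlonglongrightarrow> (norm (x - p))\<^sup>2"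
      by (intro tendsto_intros p)
    show "(\<lambda>j. d + inverse (Suc j)) \<longlonglongrightarrow> d + 0"
      by (intro tendsto_intros LIMSEQ_inverse_real_of_nat)
  qed (use m(2) less_imp_le in blast)
  then have "norm (x - p) \<le> norm (x - a)" if "a \<in> M" for a
    using d_le[OF that] by (simp add: power2_le_imp_le)
  then show ?thesis
    using closed_sequentially[OF assms(1) m(1) p] by blast
qed

lemma orthogonal_projection_exists:
  fixes M :: "'a::chilbert_space set"
  assumes "csubspace M" "closed M"
  shows "\<exists>p\<in>M. \<forall>w\<in>M. cinner (x - p) w = 0"
proof -
  have "M \<noteq> {}" using assms(1) unfolding csubspace_def by blast
  then obtain p where p: "p \<in> M" and nearest: "\<And>a. a \<in> M \<Longrightarrow> norm (x - p) \<le> norm (x - a)"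
    using nearest_point_exists[OF assms(2) csubspace_convex[OF assms(1)]] by blast
  have "cinner (x - p) w = 0" if "w \<in> M" for w
  proof (rule cinner.orthogonal_if_minimal)
    fix t
    have "p + t *\<^sub>C w \<in> M" using assms(1) p that unfolding csubspace_def by blast
    then have "(norm (x - p))\<^sup>2 \<le> (norm (x - p - t *\<^sub>C w))\<^sup>2"
      using nearest by (simp add: diff_diff_eq power_mono)
    then show "Re (cinner (x - p) (x - p)) \<le> Re (cinner (x - p - t *\<^sub>C w) (x - p - t *\<^sub>C w))"
      by (simp add: power2_norm_eq_cinner)
  qed
  with p show ?thesis by blast
qed

definition proj :: "'a::chilbert_space set \<Rightarrow> 'a \<Rightarrow> 'a" where
  "proj M x = (SOME p. p \<in> M \<and> (\<forall>w\<in>M. cinner (x - p) w = 0))"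

context
  fixes M :: "'a::chilbert_space set"
  assumes subspace: "csubspace M" and closed: "closed M"
begin

lemma proj_in: "proj M x \<in> M"
  and proj_orthogonal: "w \<in> M \<Longrightarrow> cinner (x - proj M x) w = 0"
  using someI_ex[OF orthogonal_projection_exists[OF subspace closed, unfolded Bex_def]]
  unfolding proj_def by blast+

lemma proj_eqI:
  assumes "p \<in> M" "\<And>w. w \<in> M \<Longrightarrow> cinner (x - p) w = 0"
  shows "proj M x = p"
proof -
  let ?d = "proj M x - p"
  have "?d \<in> M" using subspace proj_in assms(1) by (rule csubspace_diff)
  then have "cinner ?d ?d = cinner (x - p) ?d - cinner (x - proj M x) ?d"
    by (simp add: cinner.diff_left[symmetric])
  also have "\<dots> = 0" using assms(2) proj_orthogonal \<open>?d \<in> M\<close> by simp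
  finally show ?thesis by (simp add: cinner_self_eq_zero)
qed

lemma norm_proj_le: "norm (proj M x) \<le> norm x"
proof -
  have "cinner (proj M x) (x - proj M x) = 0"
    using proj_orthogonal[OF proj_in, of x] by (subst cinner.herm) simp
  then have "(norm x)\<^sup>2 = (norm (proj M x))\<^sup>2 + (norm (x - proj M x))\<^sup>2"
    using norm_add_power2[of "proj M x" "x - proj M x"] by simp
  then show ?thesis by (simp add: power2_le_imp_le)
qed

lemma cblinear_proj: "cblinear (proj M)"
  unfolding cblinear_def
proof
  have add: "proj M (x + y) = proj M x + proj M y" for x y
  proof (rule proj_eqI)
    show "proj M x + proj M y \<in> M"
      using subspace proj_in unfolding csubspace_def by blast
    show "cinner (x + y - (proj M x + proj M y)) w = 0" if "w \<in> M" for w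
    proof -
      have "x + y - (proj M x + proj M y) = (x - proj M x) + (y - proj M y)" by simp
      then show ?thesis
        using proj_orthogonal[OF that, of x] proj_orthogonal[OF that, of y]
        by (simp only: cinner_add_left) simp
    qed
  qed
  have scale: "proj M (c *\<^sub>C x) = c *\<^sub>C proj M x" for c x
  proof (rule proj_eqI)
    show "c *\<^sub>C proj M x \<in> M"
      using subspace proj_in unfolding csubspace_def by blast
    show "cinner (c *\<^sub>C x - c *\<^sub>C proj M x) w = 0" if "w \<in> M" for w
      using proj_orthogonal[OF that, of x]
      by (simp add: cinner_scaleC_left flip: scaleC_diff_right)
  qed
  show "bounded_linear (proj M)"
    by (rule bounded_linear_intro[where K = 1])
      (simp_all add: add scale scaleR_scaleC norm_proj_le)
  show "\<forall>c x. proj M (c *\<^sub>C x) = c *\<^sub>C proj M x"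
    using scale by blast
qed

end

lemma cblinear_bounded_linear: "cblinear T \<Longrightarrow> bounded_linear T"
  unfolding cblinear_def by blast

lemma cblinear_scaleC: "cblinear T \<Longrightarrow> T (c *\<^sub>C x) = c *\<^sub>C T x"
  unfolding cblinear_def by blast

lemma cblinear_add: "cblinear T \<Longrightarrow> T (x + y) = T x + T y"
  by (simp add: cblinear_bounded_linear linear_add bounded_linear.linear)

lemma cblinear_diff: "cblinear T \<Longrightarrow> T (x - y) = T x - T y"
  by (simp add: cblinear_bounded_linear linear_diff bounded_linear.linear)

lemma cblinear_compose: "cblinear S \<Longrightarrow> cblinear T \<Longrightarrow> cblinear (S \<circ> T)"
  unfolding cblinear_def using bounded_linear_compose by (auto simp: o_def)

lemma cblinear_funpow: "cblinear T \<Longrightarrow> cblinear (T ^^ n)"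
proof (induction n)
  case 0
  show ?case unfolding cblinear_def by (simp add: id_def)
qed (simp add: cblinear_compose)

lemma norm_funpow_le:
  fixes M :: "'a::real_normed_vector \<Rightarrow> 'a"
  assumes "\<And>y. norm (M y) \<le> norm y * K" "0 \<le> K"
  shows "norm ((M ^^ n) y) \<le> K ^ n * norm y"
proof (induction n)
  case (Suc n)
  have "norm ((M ^^ Suc n) y) \<le> norm ((M ^^ n) y) * K"
    using assms(1) by simp
  also have "\<dots> \<le> K ^ Suc n * norm y"
    using mult_right_mono[OF Suc.IH assms(2)] by (simp add: ac_simps)
  finally show ?case .
qed simp

theorem Riesz_representation:
  fixes f :: "'a::chilbert_space \<Rightarrow> complex"
  assumes bl: "bounded_linear f" and scale: "\<And>c x. f (c *\<^sub>C x) = c * f x"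
  shows "\<exists>v. \<forall>x. f x = cinner x v"
proof (cases "\<forall>x. f x = 0")
  case True
  then show ?thesis by (intro exI[of _ 0]) simp
next
  case False
  then obtain x0 where "f x0 \<noteq> 0" by blast
  let ?K = "{x. f x = 0}"
  have "closed ?K"
    using bl by (intro closed_Collect_eq) (auto intro: linear_continuous_on)
  moreover have "csubspace ?K"
    unfolding csubspace_def using bl scale by (auto simp: linear_simps)
  ultimately obtain p where "f p = 0" and orth: "\<And>w. f w = 0 \<Longrightarrow> cinner (x0 - p) w = 0"
    using orthogonal_projection_exists[of ?K x0] by blast
  define z where "z = x0 - p"
  have fz: "f z \<noteq> 0"
    using bl \<open>f x0 \<noteq> 0\<close> \<open>f p = 0\<close> unfolding z_def by (simp add: linear_simps)
  then have zz: "cinner z z \<noteq> 0"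
    using bl by (auto simp: cinner_self_eq_zero linear_simps)
  have zz_real: "cnj (cinner z z) = cinner z z"
    by (rule cinner.herm[symmetric])
  \<comment> \<open>\<open>z\<close> is orthogonal to the kernel, which contains \<open>f x *\<^sub>C z - f z *\<^sub>C x\<close>\<close>
  have "f x * cinner z z = f z * cinner x z" for x
  proof -
    have "f (f x *\<^sub>C z - f z *\<^sub>C x) = 0"
      using bl scale by (simp add: linear_simps)
    then have "cinner z (f x *\<^sub>C z - f z *\<^sub>C x) = 0"
      using orth unfolding z_def by blast
    then have "cnj (f x) * cinner z z = cnj (f z) * cinner z x"
      by (simp add: cinner.diff_right cinner.scale_right)
    then have "cnj (cnj (f x) * cinner z z) = cnj (cnj (f z) * cinner z x)"
      by simp
    then show ?thesis
      using zz_real by (simp add: cinner.herm[of x z])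
  qed
  then have "f x = cinner x ((cnj (f z) / cinner z z) *\<^sub>C z)" for x
    using zz zz_real by (simp add: cinner.scale_right field_simps)
  then show ?thesis by blast
qed

lemma adj_cinner:
  fixes T :: "'a::chilbert_space \<Rightarrow> 'a"
  assumes "cblinear T"
  shows "cinner (T x) y = cinner x (adj T y)"
proof -
  have "\<exists>v. \<forall>x. cinner (T x) y = cinner x v" for y
  proof (rule Riesz_representation)
    show "bounded_linear (\<lambda>x. cinner (T x) y)"
      using bounded_linear_compose[OF bounded_linear_cinner_left cblinear_bounded_linear[OF assms]] .
    show "cinner (T (c *\<^sub>C x)) y = c * cinner (T x) y" for c x
      using assms by (simp add: cblinear_scaleC cinner_scaleC_left)
  qed
  then obtain S where S: "\<And>x y. cinner (T x) y = cinner x (S y)"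
    by metis
  have "adj T = S"
    unfolding adj_def
  proof (rule the_equality)
    show "\<forall>x y. cinner (T x) y = cinner x (S y)" using S by blast
    show "S' = S" if "\<forall>x y. cinner (T x) y = cinner x (S' y)" for S'
      using that S by (metis ext cinner_eqI)
  qed
  then show ?thesis using S by simp
qed

section \<open>Positive operators and the A-adjoint\<close>

lemma positive_op_cblinear: "positive_op A \<Longrightarrow> cblinear A"
  unfolding positive_op_def by blast

lemma positive_op_selfadjoint:
  fixes A :: "'a::complex_inner \<Rightarrow> 'a"
  assumes A: "positive_op A"
  shows "cinner (A x) y = cinner x (A y)"
proof -
  note lin = cblinear_add[OF positive_op_cblinear[OF A]] cblinear_scaleC[OF positive_op_cblinear[OF A]]
  define D where "D u v = cinner (A u) v - cinner u (A v)" for u v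
  have D_self: "D u u = 0" for u
  proof -
    have "Im (cinner (A u) u) = 0" using A unfolding positive_op_def by blast
    then have "cinner (A u) u = cnj (cinner (A u) u)" by (simp add: complex_eq_iff)
    then show ?thesis unfolding D_def by (simp add: cinner.herm[of u])
  qed
  \<comment> \<open>polarization: \<open>D\<close> is sesquilinear and vanishes on the diagonal\<close>
  have "D (x + y) (x + y) = D x x + D y y + (D x y + D y x)"
    unfolding D_def by (simp add: lin cinner_add_left cinner.add_right algebra_simps)
  moreover have "D (x + \<i> *\<^sub>C y) (x + \<i> *\<^sub>C y) = D x x + D y y + \<i> * (D y x - D x y)"
    unfolding D_def
    by (simp add: lin cinner_add_left cinner.add_right cinner_scaleC_left cinner.scale_right
        algebra_simps)
  ultimately have "D x y + D y x = 0" "D y x - D x y = 0"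
    by (simp_all add: D_self)
  then have "D x y = 0" by simp
  then show ?thesis unfolding D_def by simp
qed

lemma psd_form_inner_A:
  fixes A :: "'a::complex_inner \<Rightarrow> 'a"
  assumes A: "positive_op A"
  shows "psd_form (inner_A A)"
proof
  note lin = cblinear_add[OF positive_op_cblinear[OF A]] cblinear_scaleC[OF positive_op_cblinear[OF A]]
  show "inner_A A (x + y) z = inner_A A x z + inner_A A y z" for x y z
    unfolding inner_A_def by (simp add: lin cinner_add_left)
  show "inner_A A (c *\<^sub>C x) y = c * inner_A A x y" for c x y
    unfolding inner_A_def by (simp add: lin cinner_scaleC_left)
  show "inner_A A x y = cnj (inner_A A y x)" for x y
    unfolding inner_A_def by (simp add: positive_op_selfadjoint[OF A, of x] cinner.herm[of x])
  show "0 \<le> Re (inner_A A x x)" for x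
    using A unfolding positive_op_def inner_A_def by blast
qed

lemma positive_op_orthogonal_range_imp_kernel:
  fixes A :: "'a::complex_inner \<Rightarrow> 'a"
  assumes A: "positive_op A" and orth: "\<And>u. cinner v (A u) = 0"
  shows "A v = 0"
proof -
  have "cinner (A v) (A v) = 0"
    using orth[of "A v"] by (simp add: positive_op_selfadjoint[OF A])
  then show ?thesis by (simp add: cinner_self_eq_zero)
qed

lemma positive_op_kernel_closure_range:
  fixes A :: "'a::complex_inner \<Rightarrow> 'a"
  assumes A: "positive_op A" and "A d = 0" and "d \<in> closure (range A)"
  shows "d = 0"
proof -
  have "range A \<subseteq> {m. cinner m d = 0}"
    using \<open>A d = 0\<close> by (auto simp: positive_op_selfadjoint[OF A])
  moreover have "closed {m. cinner m d = 0}"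
    by (intro closed_Collect_eq linear_continuous_on bounded_linear_cinner_left continuous_on_const)
  ultimately have "closure (range A) \<subseteq> {m. cinner m d = 0}"
    by (rule closure_minimal)
  then show ?thesis
    using \<open>d \<in> closure (range A)\<close> by (auto simp: cinner_self_eq_zero)
qed

lemma csubspace_range: "cblinear A \<Longrightarrow> csubspace (range A)"
  unfolding csubspace_def
  by (auto simp flip: cblinear_add cblinear_scaleC intro: exI[of _ 0])
    (metis cblinear_bounded_linear linear_0 bounded_linear.linear rangeI)

lemma reduced_solution_exists:
  fixes A T :: "'a::chilbert_space \<Rightarrow> 'a"
  assumes A: "positive_op A" and T: "T \<in> B_A A"
  shows "\<exists>X. cblinear X \<and> (\<forall>x. A (X x) = adj T (A x)) \<and> range X \<subseteq> closure (range A)"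
proof -
  obtain W where cT: "cblinear T" and cW: "cblinear W"
    and TW: "\<And>x y. inner_A A (T x) y = inner_A A x (W y)"
    using T unfolding B_A_def by blast
  let ?M = "closure (range A)"
  have M: "csubspace ?M" "closed ?M"
    using csubspace_closure[OF csubspace_range[OF positive_op_cblinear[OF A]]] by simp_all
  have AW: "A (W x) = adj T (A x)" for x
  proof (rule cinner_eqI)
    fix y
    have "cinner y (A (W x)) = inner_A A y (W x)"
      unfolding inner_A_def by (rule positive_op_selfadjoint[OF A, symmetric])
    also have "\<dots> = inner_A A (T y) x"
      by (rule TW[symmetric])
    also have "\<dots> = cinner y (adj T (A x))"
      unfolding inner_A_def positive_op_selfadjoint[OF A] by (rule adj_cinner[OF cT])
    finally show "cinner y (A (W x)) = cinner y (adj T (A x))" .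
  qed
  have "A (W x - proj ?M (W x)) = 0" for x
    using A proj_orthogonal[OF M closure_subset[THEN subsetD, OF rangeI]]
    by (rule positive_op_orthogonal_range_imp_kernel)
  then have "A (proj ?M (W x)) = adj T (A x)" for x
    using AW by (simp add: cblinear_diff[OF positive_op_cblinear[OF A]])
  moreover have "cblinear (proj ?M \<circ> W)"
    by (rule cblinear_compose[OF cblinear_proj[OF M] cW])
  moreover have "range (proj ?M \<circ> W) \<subseteq> ?M"
    using proj_in[OF M] by auto
  ultimately show ?thesis by (intro exI[of _ "proj ?M \<circ> W"]) simp
qed

lemma
  fixes A T :: "'a::chilbert_space \<Rightarrow> 'a"
  assumes A: "positive_op A" and T: "T \<in> B_A A"
  shows cblinear_sharp_A: "cblinear (sharp_A A T)"
    and sharp_A_solves: "A (sharp_A A T x) = adj T (A x)"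
proof -
  let ?P = "\<lambda>X. cblinear X \<and> (\<forall>x. A (X x) = adj T (A x)) \<and> range X \<subseteq> closure (range A)"
  have "\<exists>!X. ?P X"
  proof (rule ex_ex1I)
    show "\<exists>X. ?P X" by (rule reduced_solution_exists[OF A T])
  next
    fix X Y assume "?P X" "?P Y"
    show "X = Y"
    proof
      fix x
      have "A (X x - Y x) = 0"
        using \<open>?P X\<close> \<open>?P Y\<close> by (simp add: cblinear_diff[OF positive_op_cblinear[OF A]])
      moreover have "X x - Y x \<in> closure (range A)"
        using \<open>?P X\<close> \<open>?P Y\<close> csubspace_closure[OF csubspace_range[OF positive_op_cblinear[OF A]]]
        by (blast intro: csubspace_diff)
      ultimately have "X x - Y x = 0"
        by (rule positive_op_kernel_closure_range[OF A])
      then show "X x = Y x" by simp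
    qed
  qed
  then have "?P (sharp_A A T)"
    unfolding sharp_A_def by (rule theI')
  then show "cblinear (sharp_A A T)" "A (sharp_A A T x) = adj T (A x)"
    by simp_all
qed

lemma inner_A_sharp_A:
  fixes A T :: "'a::chilbert_space \<Rightarrow> 'a"
  assumes A: "positive_op A" and T: "T \<in> B_A A"
  shows "inner_A A (T x) y = inner_A A x (sharp_A A T y)"
proof -
  have "cblinear T" using T unfolding B_A_def by blast
  then show ?thesis
    unfolding inner_A_def
    by (simp add: positive_op_selfadjoint[OF A] adj_cinner sharp_A_solves[OF A T])
qed

section \<open>The A-numerical radius\<close>

lemma Re_inner_A_funpow_le:
  fixes A M :: "'a::complex_inner \<Rightarrow> 'a"
  assumes A: "positive_op A" and "0 \<le> K" and K: "\<And>y. norm (M y) \<le> norm y * K"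
  shows "\<exists>C. \<forall>n. Re (inner_A A ((M ^^ n) x) x) \<le> C * K ^ n"
proof -
  obtain KA where "0 < KA" and KA: "\<And>y. norm (A y) \<le> norm y * KA"
    using bounded_linear.pos_bounded[OF cblinear_bounded_linear[OF positive_op_cblinear[OF A]]]
    by blast
  have "Re (inner_A A ((M ^^ n) x) x) \<le> (KA * (norm x)\<^sup>2) * K ^ n" for n
  proof -
    have "Re (inner_A A ((M ^^ n) x) x) \<le> norm (A ((M ^^ n) x)) * norm x"
      unfolding inner_A_def using complex_Re_le_cmod cinner_Cauchy_Schwarz by (rule order_trans)
    also have "\<dots> \<le> (norm ((M ^^ n) x) * KA) * norm x"
      by (intro mult_right_mono KA) simp
    also have "\<dots> \<le> (K ^ n * norm x * KA) * norm x"
      using \<open>0 < KA\<close> \<open>0 \<le> K\<close> by (intro mult_right_mono norm_funpow_le K) auto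
    finally show ?thesis
      by (simp add: power2_eq_square ac_simps)
  qed
  then show ?thesis by blast
qed

lemma positive_selfadjoint_inner_A_le:
  fixes A M :: "'a::complex_inner \<Rightarrow> 'a"
  assumes A: "positive_op A"
    and sa: "psd_form.selfadjoint (inner_A A) M" and pos: "psd_form.positive (inner_A A) M"
    and "0 < K" and K: "\<And>y. norm (M y) \<le> norm y * K"
  shows "Re (inner_A A (M x) x) \<le> K * Re (inner_A A x x)"
proof -
  interpret A: psd_form "inner_A A" by (rule psd_form_inner_A[OF A])
  obtain C where C: "\<And>n. Re (inner_A A ((M ^^ n) x) x) \<le> C * K ^ n"
    using Re_inner_A_funpow_le[OF A _ K] \<open>0 < K\<close> by auto
  define f0 f1 where "f0 = Re (inner_A A x x)" and "f1 = Re (inner_A A (M x) x)"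
  show ?thesis
  proof (cases "f0 = 0")
    case True
    then have "cmod (inner_A A (M x) x) = 0"
      using A.Cauchy_Schwarz[of "M x" x] unfolding f0_def by simp
    then show ?thesis using True complex_Re_le_cmod[of "inner_A A (M x) x"] unfolding f0_def by simp
  next
    case False
    then have "0 < f0" using A.nonneg[of x] unfolding f0_def by simp
    \<comment> \<open>McCarthy's inequality against the crude norm bound for \<open>M ^^ n\<close>\<close>
    have "(f1 / f0) ^ n \<le> (C / f0) * K ^ n" for n
    proof -
      have "f1 ^ n * f0 \<le> f0 ^ n * (C * K ^ n)"
        using A.McCarthy_inequality[OF sa pos, of x n] C[of n] \<open>0 < f0\<close> unfolding f0_def f1_def
        by (meson order_trans mult_left_mono less_imp_le zero_le_power)
      then show ?thesis
        using \<open>0 < f0\<close> by (simp add: field_simps)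
    qed
    then have "f1 / f0 \<le> K"
      by (rule le_of_power_le_const_mult_power[OF \<open>0 < K\<close>])
    then show ?thesis
      using \<open>0 < f0\<close> unfolding f0_def f1_def by (simp add: divide_le_eq mult.commute)
  qed
qed

lemma positive_selfadjoint_inner_A_bounded:
  fixes A M :: "'a::complex_inner \<Rightarrow> 'a"
  assumes A: "positive_op A" and M: "bounded_linear M"
    and sa: "psd_form.selfadjoint (inner_A A) M" and pos: "psd_form.positive (inner_A A) M"
  shows "\<exists>K. \<forall>x. cmod (inner_A A (M x) x) \<le> K * Re (inner_A A x x)"
proof -
  interpret A: psd_form "inner_A A" by (rule psd_form_inner_A[OF A])
  obtain K where "0 < K" and K: "\<And>y. norm (M y) \<le> norm y * K"
    using bounded_linear.pos_bounded[OF M] by blast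
  have "cmod (inner_A A (M x) x) = Re (inner_A A (M x) x)" for x
    using A.selfadjoint_of_real[OF sa, of x] pos unfolding A.positive_def
    by (metis norm_of_real abs_of_nonneg)
  then show ?thesis
    using positive_selfadjoint_inner_A_le[OF A sa pos \<open>0 < K\<close> K] by auto
qed

lemma cmod_inner_A_le_omega_A:
  assumes bound: "\<And>y. cmod (inner_A A (R y) y) \<le> K * Re (inner_A A y y)" and x: "norm_A A x = 1"
  shows "cmod (inner_A A (R x) x) \<le> omega_A A R"
proof -
  have "bdd_above {cmod (inner_A A (R y) y) | y. norm_A A y = 1}"
  proof (rule bdd_aboveI)
    fix r assume "r \<in> {cmod (inner_A A (R y) y) | y. norm_A A y = 1}"
    then obtain y where "norm_A A y = 1" and "r = cmod (inner_A A (R y) y)" by blast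
    then show "r \<le> K"
      using bound[of y] unfolding norm_A_def by simp
  qed
  then show ?thesis
    unfolding omega_A_def using x by (intro cSup_upper) auto
qed

theorem sharp_A_power_bound:
  fixes A S :: "'a::chilbert_space \<Rightarrow> 'a"
  assumes A: "positive_op A" and S: "S \<in> B_A A" and x: "norm_A A x = 1"
  shows "cmod (inner_A A (S x) x) ^ (2 * n)
    \<le> omega_A A (\<lambda>x. ((sharp_A A S \<circ> S) ^^ n) x + \<i> *\<^sub>C ((S \<circ> sharp_A A S) ^^ n) x) / sqrt 2"
proof -
  interpret A: psd_form "inner_A A" by (rule psd_form_inner_A[OF A])
  let ?X = "sharp_A A S"
  let ?R = "\<lambda>x. ((?X \<circ> S) ^^ n) x + \<i> *\<^sub>C ((S \<circ> ?X) ^^ n) x"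
  note adj = inner_A_sharp_A[OF A S]
  have unit: "Re (inner_A A x x) = 1"
    using x unfolding norm_A_def by simp
  have "cblinear S" using S unfolding B_A_def by blast
  then have bl: "bounded_linear ((?X \<circ> S) ^^ n)" "bounded_linear ((S \<circ> ?X) ^^ n)"
    using cblinear_sharp_A[OF A S]
    by (simp_all add: cblinear_bounded_linear cblinear_funpow cblinear_compose)
  have "A.selfadjoint ((?X \<circ> S) ^^ n)" "A.positive ((?X \<circ> S) ^^ n)"
    "A.selfadjoint ((S \<circ> ?X) ^^ n)" "A.positive ((S \<circ> ?X) ^^ n)"
    using A.adjoint_pair_selfadjoint_positive[OF adj]
    by (simp_all add: A.selfadjoint_funpow A.positive_funpow)
  then obtain KP KQ
    where KP: "\<And>y. cmod (inner_A A (((?X \<circ> S) ^^ n) y) y) \<le> KP * Re (inner_A A y y)"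
      and KQ: "\<And>y. cmod (inner_A A (((S \<circ> ?X) ^^ n) y) y) \<le> KQ * Re (inner_A A y y)"
    using positive_selfadjoint_inner_A_bounded[OF A bl(1)]
      positive_selfadjoint_inner_A_bounded[OF A bl(2)]
    by blast
  have "cmod (inner_A A (?R y) y) \<le> (KP + KQ) * Re (inner_A A y y)" for y
    using norm_triangle_ineq[of "inner_A A (((?X \<circ> S) ^^ n) y) y"
        "\<i> * inner_A A (((S \<circ> ?X) ^^ n) y) y"] KP[of y] KQ[of y]
    by (simp add: A.add_left A.scale_left norm_mult algebra_simps)
  then have "cmod (inner_A A (?R x) x) \<le> omega_A A ?R"
    using x by (rule cmod_inner_A_le_omega_A)
  then show ?thesis
    using A.adjoint_pair_power_bound[OF adj unit, of n] by (simp add: divide_right_mono order_trans)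
qed

lemma norm_A_unit_exists:
  fixes A :: "'a::complex_inner \<Rightarrow> 'a"
  assumes A: "positive_op A" and "A \<noteq> (\<lambda>_. 0)"
  shows "\<exists>x. norm_A A x = 1"
proof -
  interpret A: psd_form "inner_A A" by (rule psd_form_inner_A[OF A])
  obtain y where "A y \<noteq> 0" using assms(2) by auto
  have "0 < Re (inner_A A y y)"
  proof (rule ccontr)
    assume "\<not> ?thesis"
    then have "Re (inner_A A y y) = 0" using A.nonneg[of y] by simp
    then have "inner_A A (A y) y = 0"
      using A.Cauchy_Schwarz[of "A y" y] by simp
    then have "cinner (A y) (A y) = 0"
      unfolding inner_A_def by (simp only: positive_op_selfadjoint[OF A, of "A y" y])
    then show False
      using \<open>A y \<noteq> 0\<close> by (simp add: cinner_self_eq_zero)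
  qed
  define r where "r = 1 / sqrt (Re (inner_A A y y))"
  have "Re (inner_A A (of_real r *\<^sub>C y) (of_real r *\<^sub>C y)) = r\<^sup>2 * Re (inner_A A y y)"
    by (simp add: A.scale_left A.scale_right power2_eq_square)
  then have "norm_A A (of_real r *\<^sub>C y) = 1"
    using \<open>0 < Re (inner_A A y y)\<close> unfolding norm_A_def r_def by (simp add: power_divide)
  then show ?thesis by blast
qed

theorem theorem3p13:
  fixes A :: "'a::chilbert_space \<Rightarrow> 'a"
    and S :: "nat \<Rightarrow> 'a \<Rightarrow> 'a"
    and k n :: nat
  assumes "positive_op A" and "A \<noteq> (\<lambda>_. 0)"
    and "k \<ge> 1"
    and "\<forall>i\<in>{1..k}. S i \<in> B_A A"
    and "n \<ge> 1"
  shows "omega_A A (\<lambda>x. \<Sum>i=1..k. S i x) ^ (2 * n)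
    \<le> real k ^ (2 * n - 1) / sqrt 2 *
       (\<Sum>i=1..k. omega_A A (\<lambda>x. ((sharp_A A (S i) \<circ> S i) ^^ n) x
                                  + \<i> *\<^sub>C ((S i \<circ> sharp_A A (S i)) ^^ n) x))"
proof -
  interpret A: psd_form "inner_A A" using assms(1) by (rule psd_form_inner_A)
  define w where "w i = omega_A A (\<lambda>x. ((sharp_A A (S i) \<circ> S i) ^^ n) x
                                  + \<i> *\<^sub>C ((S i \<circ> sharp_A A (S i)) ^^ n) x)" for i
  have "cmod (inner_A A (\<Sum>i=1..k. S i x) x) ^ (2 * n) \<le> real k ^ (2 * n - 1) / sqrt 2 * (\<Sum>i=1..k. w i)"
    if x: "norm_A A x = 1" for x
  proof -
    have "cmod (inner_A A (\<Sum>i=1..k. S i x) x) \<le> (\<Sum>i=1..k. cmod (inner_A A (S i x) x))"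
      by (simp add: A.sum_left norm_sum)
    then have "cmod (inner_A A (\<Sum>i=1..k. S i x) x) ^ (2 * n)
        \<le> (\<Sum>i=1..k. cmod (inner_A A (S i x) x)) ^ (2 * n)"
      by (rule power_mono) simp
    also have "\<dots> \<le> real k ^ (2 * n - 1) * (\<Sum>i=1..k. cmod (inner_A A (S i x) x) ^ (2 * n))"
      using power_sum_le_card_power_sum[of "{1..k}" "2 * n"] assms(3,5) by simp
    also have "\<dots> \<le> real k ^ (2 * n - 1) * (\<Sum>i=1..k. w i / sqrt 2)"
      using sharp_A_power_bound[OF assms(1) _ x] assms(4)
      by (intro mult_left_mono sum_mono) (auto simp: w_def)
    finally show ?thesis
      by (simp add: sum_divide_distrib[symmetric])
  qed
  then show ?thesis
    unfolding omega_A_def w_def using norm_A_unit_exists[OF assms(1,2)] assms(5)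
    by (intro Sup_power_le) auto
qed

end
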